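(* Let $P_{(\pm)}$ be as below and, for $v\in\mathbb C$, set $\hat R_+(v)=I+vP_{(+)}$ and $\hat R_-(v)=I+vP_{(-)}$. If $v,v',v''\in\mathbb C$ satisfy $vv''\neq4$ and $v'=\dfrac{v+v''+vv''}{1-\frac14vv''}$, then $$\hat R_{\pm,(12)}(v)\,\hat R_{\pm,(23)}(v')\,\hat R_{\pm,(12)}(v'')=\hat R_{\pm,(23)}(v'')\,\hat R_{\pm,(12)}(v')\,\hat R_{\pm,(23)}(v)$$ (for each choice of sign, with the same sign throughout).
   Context: $P_{(+)}=\tfrac12\begin{pmatrix}1&0&0&1\\0&0&0&0\\0&0&0&0\\1&0&0&1\end{pmatrix}$, $P_{(-)}=\tfrac12\begin{pmatrix}1&0&0&-1\\0&0&0&0\\0&0&0&0\\-1&0&0&1\end{pmatrix}$, $I$ the $4\times4$ identity. For a $4\times4$ matrix $A$ acting on $\mathbb C^2\otimes\mathbb C^2$ (basis ordered $e_1\otimes e_1,e_1\otimes e_2,e_2\otimes e_1,e_2\otimes e_2$), $A_{(12)}=A\otimes I_2$ and $A_{(23)}=I_2\otimes A$ on $(\mathbb C^2)^{\otimes 3}$. *)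

theory Defs
  imports Complex_Main
begin

text \<open>Matrices are represented as functions nat \<Rightarrow> nat \<Rightarrow> complex, indices starting at 0.
  A 4x4 matrix acts on C^2 (x) C^2 with basis index 2*a + b for e_(a+1) (x) e_(b+1), a,b in {0,1}.
  An 8x8 matrix acts on (C^2)^(x)3 with basis index 4*a + 2*b + c.\<close>

type_synonym cmat = "nat \<Rightarrow> nat \<Rightarrow> complex"

definition mat_mult :: "nat \<Rightarrow> cmat \<Rightarrow> cmat \<Rightarrow> cmat" where
  "mat_mult n A B = (\<lambda>i k. if i < n \<and> k < n then (\<Sum>j<n. A i j * B j k) else 0)"

definition idm :: "nat \<Rightarrow> cmat" where
  "idm n = (\<lambda>i j. if i < n \<and> j < n \<and> i = j then 1 else 0)"

definition mat_of_list :: "complex list list \<Rightarrow> cmat" where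
  "mat_of_list xs = (\<lambda>i j. if i < length xs \<and> j < length (xs ! i) then xs ! i ! j else 0)"

definition Pplus :: cmat where
  "Pplus = mat_of_list [[1/2,0,0,1/2],[0,0,0,0],[0,0,0,0],[1/2,0,0,1/2]]"

definition Pminus :: cmat where
  "Pminus = mat_of_list [[1/2,0,0,-1/2],[0,0,0,0],[0,0,0,0],[-1/2,0,0,1/2]]"

definition mat_add :: "cmat \<Rightarrow> cmat \<Rightarrow> cmat" where
  "mat_add A B = (\<lambda>i j. A i j + B i j)"

definition mat_smult :: "complex \<Rightarrow> cmat \<Rightarrow> cmat" where
  "mat_smult c A = (\<lambda>i j. c * A i j)"

definition Rhat :: "cmat \<Rightarrow> complex \<Rightarrow> cmat" where
  "Rhat P v = mat_add (idm 4) (mat_smult v P)"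

definition kron :: "nat \<Rightarrow> nat \<Rightarrow> cmat \<Rightarrow> cmat \<Rightarrow> cmat" where
  "kron m n A B = (\<lambda>r s. if r < m*n \<and> s < m*n then A (r div n) (s div n) * B (r mod n) (s mod n) else 0)"

definition at12 :: "cmat \<Rightarrow> cmat" where
  "at12 A = kron 4 2 A (idm 2)"

definition at23 :: "cmat \<Rightarrow> cmat" where
  "at23 A = kron 2 4 (idm 2) A"

end

theory Submission
  imports Defs
begin

text \<open>Write X = P_(12) and Y = P_(23). Since P_(+-) is the rank-one projection onto
  (e1 (x) e1 +- e2 (x) e2)/sqrt 2, each of X and Y is a sum of two rank-one projections onto vectors
  of the form (e_a +- e_b)/sqrt 2, and every projection vector of X has inner product 1/2 with one
  projection vector of Y and is orthogonal to the other. Hence X and Y are idempotents satisfying the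
  Temperley-Lieb relations XYX = X/4 and YXY = Y/4. Expanding both sides of the braid relation in the
  algebra they generate, all monomials of degree at least two cancel, and the coefficients of X and Y
  agree exactly when v'(1 - v v''/4) = v + v'' + v v''.\<close>

definition sq_mat :: "nat \<Rightarrow> cmat \<Rightarrow> bool" where
  "sq_mat n A \<longleftrightarrow> (\<forall>i j. \<not> (i < n \<and> j < n) \<longrightarrow> A i j = 0)"

lemma sq_mat_eqI:
  assumes "sq_mat n A" "sq_mat n B" "\<And>i j. i < n \<Longrightarrow> j < n \<Longrightarrow> A i j = B i j"
  shows "A = B"
  using assms unfolding sq_mat_def by (intro ext) metis

lemma sq_mat_mat_mult: "sq_mat n (mat_mult n A B)"
  by (simp add: sq_mat_def mat_mult_def)

lemma sq_mat_idm: "sq_mat n (idm n)"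
  by (simp add: sq_mat_def idm_def)

lemma sq_mat_mat_add: "sq_mat n A \<Longrightarrow> sq_mat n B \<Longrightarrow> sq_mat n (mat_add A B)"
  by (simp add: sq_mat_def mat_add_def)

lemma sq_mat_kron: "sq_mat (m * n) (kron m n A B)"
  by (simp add: sq_mat_def kron_def)

lemma sq_mat_at12: "sq_mat 8 (at12 A)"
  using sq_mat_kron[of 4 2] by (simp add: at12_def)

lemma sq_mat_at23: "sq_mat 8 (at23 A)"
  using sq_mat_kron[of 2 4] by (simp add: at23_def)

lemma mat_mult_assoc: "mat_mult n (mat_mult n A B) C = mat_mult n A (mat_mult n B C)"
proof (intro ext)
  fix i k
  show "mat_mult n (mat_mult n A B) C i k = mat_mult n A (mat_mult n B C) i k"
  proof (cases "i < n \<and> k < n")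
    case True
    have "(\<Sum>j<n. (\<Sum>l<n. A i l * B l j) * C j k) = (\<Sum>j<n. \<Sum>l<n. A i l * (B l j * C j k))"
      by (simp add: sum_distrib_right mult.assoc)
    also have "\<dots> = (\<Sum>l<n. \<Sum>j<n. A i l * (B l j * C j k))"
      by (rule sum.swap)
    also have "\<dots> = (\<Sum>l<n. A i l * (\<Sum>j<n. B l j * C j k))"
      by (simp add: sum_distrib_left)
    finally show ?thesis
      using True by (simp add: mat_mult_def)
  qed (auto simp: mat_mult_def)
qed

lemma mat_mult_add_left: "mat_mult n (mat_add A B) C = mat_add (mat_mult n A C) (mat_mult n B C)"
  by (intro ext) (auto simp: mat_mult_def mat_add_def distrib_right sum.distrib)

lemma mat_mult_add_right: "mat_mult n A (mat_add B C) = mat_add (mat_mult n A B) (mat_mult n A C)"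
  by (intro ext) (auto simp: mat_mult_def mat_add_def distrib_left sum.distrib)

lemma mat_mult_smult_left: "mat_mult n (mat_smult c A) B = mat_smult c (mat_mult n A B)"
  by (intro ext) (auto simp: mat_mult_def mat_smult_def sum_distrib_left mult.assoc)

lemma mat_mult_smult_right: "mat_mult n A (mat_smult c B) = mat_smult c (mat_mult n A B)"
  by (intro ext) (auto simp: mat_mult_def mat_smult_def sum_distrib_left mult.left_commute)

lemma mat_mult_idm_left:
  assumes "sq_mat n A"
  shows "mat_mult n (idm n) A = A"
proof (rule sq_mat_eqI[OF sq_mat_mat_mult assms])
  fix i k assume "i < n" "k < n"
  then show "mat_mult n (idm n) A i k = A i k"
    by (simp add: mat_mult_def idm_def if_distrib[where f = "\<lambda>x. x * _"] cong: if_cong)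
qed

lemma mat_mult_idm_right:
  assumes "sq_mat n A"
  shows "mat_mult n A (idm n) = A"
proof (rule sq_mat_eqI[OF sq_mat_mat_mult assms])
  fix i k assume "i < n" "k < n"
  then show "mat_mult n A (idm n) i k = A i k"
    by (simp add: mat_mult_def idm_def if_distrib[where f = "\<lambda>x. _ * x"] cong: if_cong)
qed

lemma kron_idm: "kron m n (idm m) (idm n) = idm (m * n)"
proof (intro ext)
  fix r s
  show "kron m n (idm m) (idm n) r s = idm (m * n) r s"
  proof (cases "r < m * n \<and> s < m * n")
    case True
    then have "n > 0"
      by (cases n) auto
    with True have "r div n < m" "s div n < m" "r mod n < n" "s mod n < n"
      by (auto simp: less_mult_imp_div_less mult.commute)
    moreover have "r div n = s div n \<and> r mod n = s mod n \<longleftrightarrow> r = s"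
      by (metis div_mod_decomp)
    ultimately show ?thesis
      using True by (auto simp: kron_def idm_def)
  qed (auto simp: kron_def idm_def)
qed

lemma kron_add_left: "kron m n (mat_add A B) C = mat_add (kron m n A C) (kron m n B C)"
  by (intro ext) (auto simp: kron_def mat_add_def distrib_right)

lemma kron_add_right: "kron m n A (mat_add B C) = mat_add (kron m n A B) (kron m n A C)"
  by (intro ext) (auto simp: kron_def mat_add_def distrib_left)

lemma kron_smult_left: "kron m n (mat_smult c A) B = mat_smult c (kron m n A B)"
  by (intro ext) (auto simp: kron_def mat_smult_def)

lemma kron_smult_right: "kron m n A (mat_smult c B) = mat_smult c (kron m n A B)"
  by (intro ext) (auto simp: kron_def mat_smult_def)

lemma at12_Rhat: "at12 (Rhat P v) = mat_add (idm 8) (mat_smult v (at12 P))"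
  using kron_idm[of 4 2] by (simp add: at12_def Rhat_def kron_add_left kron_smult_left)

lemma at23_Rhat: "at23 (Rhat P v) = mat_add (idm 8) (mat_smult v (at23 P))"
  using kron_idm[of 2 4] by (simp add: at23_def Rhat_def kron_add_right kron_smult_right)

lemma temperley_lieb_braid:
  assumes X: "sq_mat n X" and Y: "sq_mat n Y"
    and XX: "mat_mult n X X = X" and YY: "mat_mult n Y Y = Y"
    and XYX: "mat_mult n X (mat_mult n Y X) = mat_smult \<kappa> X"
    and YXY: "mat_mult n Y (mat_mult n X Y) = mat_smult \<kappa> Y"
    and b: "b * (1 - \<kappa> * a * c) = a + c + a * c"
  shows "mat_mult n (mat_mult n (mat_add (idm n) (mat_smult a X)) (mat_add (idm n) (mat_smult b Y)))
           (mat_add (idm n) (mat_smult c X))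
       = mat_mult n (mat_mult n (mat_add (idm n) (mat_smult c Y)) (mat_add (idm n) (mat_smult b X)))
           (mat_add (idm n) (mat_smult a Y))"
proof -
  \<comment> \<open>with this value of b both sides expand to I + b X + b Y + a b XY + b c YX\<close>
  have "b = a + c + a * c + \<kappa> * a * b * c"
    using b by (simp add: algebra_simps)
  then show ?thesis
    by (simp only: mat_mult_assoc mat_mult_add_left mat_mult_add_right mat_mult_smult_left
        mat_mult_smult_right mat_mult_idm_left mat_mult_idm_right sq_mat_idm X Y XX YY XYX YXY)
      (intro ext, simp add: mat_add_def mat_smult_def, algebra)
qed

definition dyad :: "nat \<Rightarrow> (nat \<Rightarrow> complex) \<Rightarrow> (nat \<Rightarrow> complex) \<Rightarrow> cmat" where
  "dyad n u w = (\<lambda>i j. if i < n \<and> j < n then u i * w j else 0)"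

definition vdot :: "nat \<Rightarrow> (nat \<Rightarrow> complex) \<Rightarrow> (nat \<Rightarrow> complex) \<Rightarrow> complex" where
  "vdot n u w = (\<Sum>k<n. u k * w k)"

lemma sq_mat_dyad: "sq_mat n (dyad n u w)"
  by (simp add: sq_mat_def dyad_def)

lemma mat_mult_dyad: "mat_mult n (dyad n u u') (dyad n w w') = mat_smult (vdot n u' w) (dyad n u w')"
  by (intro ext)
    (auto simp: mat_mult_def dyad_def mat_smult_def vdot_def sum_distrib_left sum_distrib_right ac_simps)

lemma dyad_pair_idem:
  assumes "vdot n u' u = 1" "vdot n v' v = 1" "vdot n u' v = 0" "vdot n v' u = 0"
  shows "mat_mult n (mat_add (dyad n u u') (dyad n v v')) (mat_add (dyad n u u') (dyad n v v'))
       = mat_add (dyad n u u') (dyad n v v')"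
  by (simp add: mat_mult_add_left mat_mult_add_right mat_mult_dyad assms)
     (intro ext, simp add: mat_add_def mat_smult_def)

lemma dyad_pair_sandwich:
  assumes "vdot n u' w = c" "vdot n v' z = c" "vdot n u' z = 0" "vdot n v' w = 0"
    and "vdot n w' u = d" "vdot n z' v = d" "vdot n w' v = 0" "vdot n z' u = 0"
  shows "mat_mult n (mat_add (dyad n u u') (dyad n v v'))
           (mat_mult n (mat_add (dyad n w w') (dyad n z z')) (mat_add (dyad n u u') (dyad n v v')))
       = mat_smult (c * d) (mat_add (dyad n u u') (dyad n v v'))"
  by (simp add: mat_mult_add_left mat_mult_add_right mat_mult_smult_right mat_mult_dyad assms)
     (intro ext, simp add: mat_add_def mat_smult_def algebra_simps)

definition pair_vec :: "nat \<Rightarrow> nat \<Rightarrow> complex \<Rightarrow> nat \<Rightarrow> complex" where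
  "pair_vec a b \<sigma> = (\<lambda>k. if k = a then 1 else if k = b then \<sigma> else 0)"

text \<open>For \<sigma>^2 = 1 this is the rank-one projection onto e_a + \<sigma> e_b; the halved dual vector
  accounts for the squared length 2 of that vector.\<close>
definition pair_proj :: "nat \<Rightarrow> nat \<Rightarrow> nat \<Rightarrow> complex \<Rightarrow> cmat" where
  "pair_proj n a b \<sigma> = dyad n (pair_vec a b \<sigma>) (\<lambda>k. pair_vec a b \<sigma> k / 2)"

lemma vdot_pair_vec:
  assumes "a \<noteq> b" "a < n" "b < n"
  shows "vdot n x (pair_vec a b \<sigma>) = x a + \<sigma> * x b"
proof -
  have "vdot n x (pair_vec a b \<sigma>)
      = (\<Sum>k<n. (if k = a then x a else 0) + (if k = b then \<sigma> * x b else 0))"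
    unfolding vdot_def using assms(1) by (intro sum.cong) (auto simp: pair_vec_def)
  then show ?thesis
    using assms(2,3) by (simp add: sum.distrib)
qed

lemma Pplus_pair_proj: "Pplus = pair_proj 4 0 3 1"
  and Pminus_pair_proj: "Pminus = pair_proj 4 0 3 (-1)"
  by (intro ext; simp add: Pplus_def Pminus_def pair_proj_def dyad_def pair_vec_def mat_of_list_def
      nth_Cons' less_Suc_eq numeral_eq_Suc)+

lemma at12_pair_proj: "at12 (pair_proj 4 0 3 \<sigma>) = mat_add (pair_proj 8 0 6 \<sigma>) (pair_proj 8 1 7 \<sigma>)"
proof (rule sq_mat_eqI)
  fix i j :: nat assume "i < 8" "j < 8"
  then have "i \<in> {0,1,2,3,4,5,6,7}" "j \<in> {0,1,2,3,4,5,6,7}" by auto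
  then show "at12 (pair_proj 4 0 3 \<sigma>) i j = mat_add (pair_proj 8 0 6 \<sigma>) (pair_proj 8 1 7 \<sigma>) i j"
    by (elim insertE emptyE;
        simp add: at12_def kron_def idm_def mat_add_def pair_proj_def dyad_def pair_vec_def)
qed (simp_all add: sq_mat_at12 sq_mat_mat_add pair_proj_def sq_mat_dyad)

lemma at23_pair_proj: "at23 (pair_proj 4 0 3 \<sigma>) = mat_add (pair_proj 8 0 3 \<sigma>) (pair_proj 8 4 7 \<sigma>)"
proof (rule sq_mat_eqI)
  fix i j :: nat assume "i < 8" "j < 8"
  then have "i \<in> {0,1,2,3,4,5,6,7}" "j \<in> {0,1,2,3,4,5,6,7}" by auto
  then show "at23 (pair_proj 4 0 3 \<sigma>) i j = mat_add (pair_proj 8 0 3 \<sigma>) (pair_proj 8 4 7 \<sigma>) i j"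
    by (elim insertE emptyE;
        simp add: at23_def kron_def idm_def mat_add_def pair_proj_def dyad_def pair_vec_def)
qed (simp_all add: sq_mat_at23 sq_mat_mat_add pair_proj_def sq_mat_dyad)

lemma temperley_lieb_at12_at23:
  fixes \<sigma> :: complex
  assumes "\<sigma>\<^sup>2 = 1"
  defines "X \<equiv> at12 (pair_proj 4 0 3 \<sigma>)" and "Y \<equiv> at23 (pair_proj 4 0 3 \<sigma>)"
  shows "mat_mult 8 X X = X" "mat_mult 8 Y Y = Y"
    "mat_mult 8 X (mat_mult 8 Y X) = mat_smult (1/4) X"
    "mat_mult 8 Y (mat_mult 8 X Y) = mat_smult (1/4) Y"
proof -
  have \<sigma>\<sigma>: "\<sigma> * \<sigma> = 1"
    using assms(1) by (simp add: power2_eq_square)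
  let ?h = "\<lambda>a b k. pair_vec a b \<sigma> k / 2"
  have "vdot 8 (?h a b) (pair_vec c d \<sigma>) = pair_vec a b \<sigma> c / 2 + \<sigma> * pair_vec a b \<sigma> d / 2"
    if "c \<noteq> d" "c < 8" "d < 8" for a b c d
    using that by (simp add: vdot_pair_vec)
  then have dots: "vdot 8 (?h 0 6) (pair_vec 0 6 \<sigma>) = 1" "vdot 8 (?h 1 7) (pair_vec 1 7 \<sigma>) = 1"
    "vdot 8 (?h 0 3) (pair_vec 0 3 \<sigma>) = 1" "vdot 8 (?h 4 7) (pair_vec 4 7 \<sigma>) = 1"
    "vdot 8 (?h 0 6) (pair_vec 1 7 \<sigma>) = 0" "vdot 8 (?h 1 7) (pair_vec 0 6 \<sigma>) = 0"
    "vdot 8 (?h 0 3) (pair_vec 4 7 \<sigma>) = 0" "vdot 8 (?h 4 7) (pair_vec 0 3 \<sigma>) = 0"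
    "vdot 8 (?h 0 6) (pair_vec 0 3 \<sigma>) = 1/2" "vdot 8 (?h 1 7) (pair_vec 4 7 \<sigma>) = 1/2"
    "vdot 8 (?h 0 6) (pair_vec 4 7 \<sigma>) = 0" "vdot 8 (?h 1 7) (pair_vec 0 3 \<sigma>) = 0"
    "vdot 8 (?h 0 3) (pair_vec 0 6 \<sigma>) = 1/2" "vdot 8 (?h 4 7) (pair_vec 1 7 \<sigma>) = 1/2"
    "vdot 8 (?h 0 3) (pair_vec 1 7 \<sigma>) = 0" "vdot 8 (?h 4 7) (pair_vec 0 6 \<sigma>) = 0"
    by (simp_all add: pair_vec_def \<sigma>\<sigma>)
  show "mat_mult 8 X X = X" "mat_mult 8 Y Y = Y"
    unfolding X_def Y_def at12_pair_proj at23_pair_proj unfolding pair_proj_def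
    by (rule dyad_pair_idem; rule dots)+
  show "mat_mult 8 X (mat_mult 8 Y X) = mat_smult (1/4) X"
    "mat_mult 8 Y (mat_mult 8 X Y) = mat_smult (1/4) Y"
    unfolding X_def Y_def at12_pair_proj at23_pair_proj unfolding pair_proj_def
    using dyad_pair_sandwich[OF dots(9-16)] dyad_pair_sandwich[OF dots(13-16) dots(9-12)]
    by simp_all
qed

theorem mainTheorem7:
  fixes v v' v'' :: complex
  assumes "v * v'' \<noteq> 4"
    and "v' = (v + v'' + v * v'') / (1 - v * v'' / 4)"
  shows "\<forall>P \<in> {Pplus, Pminus}.
    mat_mult 8 (mat_mult 8 (at12 (Rhat P v)) (at23 (Rhat P v'))) (at12 (Rhat P v''))
    = mat_mult 8 (mat_mult 8 (at23 (Rhat P v'')) (at12 (Rhat P v'))) (at23 (Rhat P v))"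
proof
  fix P assume "P \<in> {Pplus, Pminus}"
  then obtain \<sigma> :: complex where "\<sigma>\<^sup>2 = 1" and P: "P = pair_proj 4 0 3 \<sigma>"
    using Pplus_pair_proj Pminus_pair_proj by (metis empty_iff insert_iff one_power2 power2_minus)
  have "1 - v * v'' / 4 \<noteq> 0"
    using assms(1) by (auto simp: field_simps)
  then have "v' * (1 - 1/4 * v * v'') = v + v'' + v * v''"
    using assms(2) by (simp add: field_simps)
  then show "mat_mult 8 (mat_mult 8 (at12 (Rhat P v)) (at23 (Rhat P v'))) (at12 (Rhat P v''))
    = mat_mult 8 (mat_mult 8 (at23 (Rhat P v'')) (at12 (Rhat P v'))) (at23 (Rhat P v))"
    unfolding at12_Rhat at23_Rhat P
    by (rule temperley_lieb_braid[OF sq_mat_at12 sq_mat_at23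
          temperley_lieb_at12_at23[OF \<open>\<sigma>\<^sup>2 = 1\<close>]])
qed

end
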